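(* Let $\ell,\hat\ell:\mathbb{R}^q\times\mathbb{R}^q\to(0,1)$ with $\hat\ell$ continuous and $\hat\ell(x,\xi)\ge\ell(x,\xi)$ for all $x,\xi\in\mathbb{R}^q$. Let $s\in\mathbb{R}^q$, $\xi_1,\dots,\xi_n\in\mathbb{R}^q$, and for functions $a,b:\mathbb{R}^q\times\mathbb{R}^q\to(0,1)$ and $x\in\mathbb{R}^q$ define $$K(s,a\,\|\,x,b;\xi_{1:n})=\sum_{k=1}^n\Big[a(s,\xi_k)\ln\frac{a(s,\xi_k)}{b(x,\xi_k)}+(1-a(s,\xi_k))\ln\frac{1-a(s,\xi_k)}{1-b(x,\xi_k)}\Big].$$ Let $c_i,c_j\in\mathbb{R}^q$ satisfy $\hat\ell(c_j,\xi_k)\ge\hat\ell(c_i,\xi_k)$ for all $k\in\{1,\dots,n\}$. Then $$K(s,\ell\,\|\,c_j,\hat\ell;\xi_{1:n})<K(s,\ell\,\|\,c_i,\hat\ell;\xi_{1:n})\implies K(s,\hat\ell\,\|\,c_j,\hat\ell;\xi_{1:n})<K(s,\hat\ell\,\|\,c_i,\hat\ell;\xi_{1:n}).$$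
   Context: $\ell$ is the true detection-probability function and $\hat\ell$ an assumed envelope; $K(s,a\|x,b;\xi_{1:n})$ is the KL divergence between the joint distribution of independent Bernoulli measurements with parameters $a(s,\xi_k)$ and that with parameters $b(x,\xi_k)$. *)

theory Defs
  imports "HOL-Analysis.Analysis"
begin

text \<open>KL divergence between products of independent Bernoulli laws with parameters
  a(s, xi k) and b(x, xi k), k = 1..n.\<close>
definition KLsum :: "'p \<Rightarrow> ('p \<Rightarrow> 'p \<Rightarrow> real) \<Rightarrow> 'p \<Rightarrow> ('p \<Rightarrow> 'p \<Rightarrow> real)
    \<Rightarrow> (nat \<Rightarrow> 'p) \<Rightarrow> nat \<Rightarrow> real" where
  "KLsum s a x b xi n = (\<Sum>k = 1..n.
      a s (xi k) * ln (a s (xi k) / b x (xi k))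
      + (1 - a s (xi k)) * ln ((1 - a s (xi k)) / (1 - b x (xi k))))"

end

theory Submission
  imports Defs
begin

text \<open>Each summand of KLsum is the Bernoulli divergence kl(a, b). For fixed parameters
  b \<ge> c the gap kl(a, b) - kl(a, c) is affine in a with slope
  (ln c - ln b) - (ln (1 - c) - ln (1 - b)) \<le> 0, so it can only shrink when a grows. Since
  the envelope dominates the true detection probability, the gap between the two candidate
  locations under the envelope is bounded by the gap under the true model, term by term.\<close>

definition bernoulli_kl :: "real \<Rightarrow> real \<Rightarrow> real" where
  "bernoulli_kl a b = a * ln (a / b) + (1 - a) * ln ((1 - a) / (1 - b))"

lemma bernoulli_kl_gap_eq:
  assumes "0 < a" "a < 1" "0 < b" "b < 1" "0 < c" "c < 1"
  shows "bernoulli_kl a b - bernoulli_kl a c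
       = a * (ln c - ln b) + (1 - a) * (ln (1 - c) - ln (1 - b))"
  using assms by (simp add: bernoulli_kl_def ln_div algebra_simps)

lemma bernoulli_kl_gap_antimono:
  assumes "0 < a" "a \<le> a'" "a' < 1" "0 < c" "c \<le> b" "b < 1"
  shows "bernoulli_kl a' b - bernoulli_kl a' c \<le> bernoulli_kl a b - bernoulli_kl a c"
proof -
  have "ln c \<le> ln b" "ln (1 - b) \<le> ln (1 - c)"
    using assms by simp_all
  then have slope: "(ln c - ln b) - (ln (1 - c) - ln (1 - b)) \<le> 0"
    by linarith
  have "(a' - a) * ((ln c - ln b) - (ln (1 - c) - ln (1 - b))) \<le> 0"
    using assms slope by (intro mult_nonneg_nonpos) simp_all
  with assms show ?thesis
    by (simp add: bernoulli_kl_gap_eq algebra_simps)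
qed

lemma KLsum_eq_sum_bernoulli_kl:
  "KLsum s a x b xi n = (\<Sum>k = 1..n. bernoulli_kl (a s (xi k)) (b x (xi k)))"
  by (simp add: KLsum_def bernoulli_kl_def)

theorem lemma2:
  fixes l lh :: "real ^ 'q \<Rightarrow> real ^ 'q \<Rightarrow> real"
    and s ci cj :: "real ^ 'q" and xi :: "nat \<Rightarrow> real ^ 'q" and n :: nat
  assumes l_range: "\<And>x y. 0 < l x y \<and> l x y < 1"
    and lh_range: "\<And>x y. 0 < lh x y \<and> lh x y < 1"
    and lh_cont: "continuous_on UNIV (\<lambda>p. lh (fst p) (snd p))"
    and lh_ge: "\<And>x y. lh x y \<ge> l x y"
    and order: "\<And>k. k \<in> {1..n} \<Longrightarrow> lh cj (xi k) \<ge> lh ci (xi k)"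
  shows "KLsum s l cj lh xi n < KLsum s l ci lh xi n
     \<longrightarrow> KLsum s lh cj lh xi n < KLsum s lh ci lh xi n"
proof
  assume true_model: "KLsum s l cj lh xi n < KLsum s l ci lh xi n"
  have "KLsum s lh cj lh xi n - KLsum s lh ci lh xi n
      \<le> KLsum s l cj lh xi n - KLsum s l ci lh xi n"
    unfolding KLsum_eq_sum_bernoulli_kl sum_subtractf[symmetric]
  proof (rule sum_mono)
    fix k assume "k \<in> {1..n}"
    then show "bernoulli_kl (lh s (xi k)) (lh cj (xi k)) - bernoulli_kl (lh s (xi k)) (lh ci (xi k))
        \<le> bernoulli_kl (l s (xi k)) (lh cj (xi k)) - bernoulli_kl (l s (xi k)) (lh ci (xi k))"
      using l_range lh_range lh_ge order by (intro bernoulli_kl_gap_antimono) auto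
  qed
  with true_model show "KLsum s lh cj lh xi n < KLsum s lh ci lh xi n"
    by linarith
qed

end
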